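(* Let $f \colon \mathbb{R}^n \to \mathbb{R}$ and $g \colon \mathbb{R}^n \to \mathbb{R}^m$ be continuously differentiable, let $X \subseteq \mathbb{R}^m$ be nonempty and closed, let $\rho>0$, and let $p^\rho(y) = \sum_{i=1}^n p_i^\rho(y_i)$ where each $p_i^\rho$ satisfies (P.1)–(P.3) below. Let $(x^*,y^* )$ be a stationary point of (SPOref) such that SP-GMFCQ holds at $x^*$. Then there exist $\alpha^*>0$ and a neighborhood $U$ of $(x^*,y^* )$ such that, for all $\alpha\ge\alpha^*$, every stationary point of Pen$(\alpha)$ lying in $U$ is a stationary point of (SPOref).
   Context: Conditions on each $p_i^\rho\colon\mathbb{R}\to\mathbb{R}$: (P.1) convex with a unique minimizer $s_i^\rho>0$; (P.2) $p_i^\rho(0)-p_i^\rho(s_i^\rho)=\rho$; (P.3) continuously differentiable. Notation: $I_0(z)=\{i : z_i=0\}$, $|x| = (|x_1|,\dots,|x_n|)^T$, $\circ$ the componentwise product, $e_i$ the $i$-th unit vector, $g'(x)$ the Jacobian of $g$, $N^{\lim}_X$ the limiting (Mordukhovich) normal cone to $X$. (SPOref) is $\min_{x,y} f(x)+p^\rho(y)$ s.t. $g(x)\in X$, $x\circ y=0$, $y\ge0$. A feasible point $(x,y)$ of (SPOref) is stationary if there exist $\lambda\in N^{\lim}_X(g(x))$, reals $\gamma_i^x$ ($i\in I_0(x)$), $\gamma_i^y$ and $\nu_i\ge 0$ ($i\in I_0(y)$) with $0 = \nabla f(x) + g'(x)^T\lambda + \sum_{i\in I_0(x)} \gamma_i^x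 y_i e_i$ and $0 = \nabla p^\rho(y) + \sum_{i\in I_0(y)}(\gamma_i^y x_i - \nu_i) e_i$. Pen$(\alpha)$ is $\min_{x,y} f(x)+p^\rho(y)+\alpha|x|^Ty$ s.t. $g(x)\in X$, $y\ge 0$; a point $(x,y)$ is stationary for Pen$(\alpha)$ if $g(x)\in X$, $y\ge0$, and there exist $\lambda\in N^{\lim}_X(g(x))$ and $\gamma_i\ge 0$ ($i\in I_0(y)$) such that $0\in \nabla f(x) + \alpha\, y\circ\partial(|x|) + g'(x)^T\lambda$ and $0 = \nabla p^\rho(y) + \alpha|x| - \sum_{i\in I_0(y)}\gamma_i e_i$, where $y\circ\partial(|x|) = \{y\circ s : s_i = \operatorname{sign}(x_i) \text{ if } x_i\ne0,\ s_i\in[-1,1] \text{ if } x_i=0\}$. SP-GMFCQ holds at $x^*$ (with $g(x^* )\in X$) if there is no nonzero pair $(\lambda^a,\lambda^b)\in\mathbb{R}^{|I_0(x^* )|}\times N^{\lim}_X(g(x^* ))$ with $\sum_{i\in I_0(x^* )}\lambda^a_i e_i + g'(x^* )^T\lambda^b = 0$. *)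

theory Defs
  imports "HOL-Analysis.Analysis"
begin

definition C1_map :: "('a::euclidean_space \<Rightarrow> 'b::euclidean_space) \<Rightarrow> bool" where
  "C1_map F \<longleftrightarrow> (\<exists>F'. (\<forall>x. (F has_derivative blinfun_apply (F' x)) (at x)) \<and> continuous_on UNIV F')"

definition regular_normal_cone :: "'a::euclidean_space set \<Rightarrow> 'a \<Rightarrow> 'a set" where
  "regular_normal_cone X z = {v. z \<in> X \<and>
     (\<forall>\<epsilon>>0. \<exists>\<delta>>0. \<forall>z'\<in>X. norm (z' - z) < \<delta> \<longrightarrow> inner v (z' - z) \<le> \<epsilon> * norm (z' - z))}"

definition limiting_normal_cone :: "'a::euclidean_space set \<Rightarrow> 'a \<Rightarrow> 'a set" where
  "limiting_normal_cone X z = {v. z \<in> X \<and> (\<exists>zk vk. (\<forall>k. zk k \<in> X \<and> vk k \<in> regular_normal_cone X (zk k))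
       \<and> zk \<longlonglongrightarrow> z \<and> vk \<longlonglongrightarrow> v)}"

definition grad :: "(real^'n \<Rightarrow> real) \<Rightarrow> real^'n \<Rightarrow> real^'n" where
  "grad F x = (\<chi> j. frechet_derivative F (at x) (axis j 1))"

definition jacT :: "(real^'n \<Rightarrow> real^'m) \<Rightarrow> real^'n \<Rightarrow> real^'m \<Rightarrow> real^'n" where
  "jacT G x l = (\<chi> j. inner l (frechet_derivative G (at x) (axis j 1)))"

definition psum :: "('n::finite \<Rightarrow> real \<Rightarrow> real) \<Rightarrow> real^'n \<Rightarrow> real" where
  "psum p y = (\<Sum>i\<in>UNIV. p i (y $ i))"

definition grad_psum :: "('n \<Rightarrow> real \<Rightarrow> real) \<Rightarrow> real^'n \<Rightarrow> real^'n" where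
  "grad_psum p y = (\<chi> i. deriv (p i) (y $ i))"

definition penalty_cond :: "real \<Rightarrow> (real \<Rightarrow> real) \<Rightarrow> bool" where
  "penalty_cond \<rho> q \<longleftrightarrow>
     convex_on UNIV q \<and>
     (\<exists>s>0. (\<forall>t. t \<noteq> s \<longrightarrow> q s < q t) \<and> q 0 - q s = \<rho>) \<and>
     (\<exists>q'. (\<forall>t. (q has_real_derivative q' t) (at t)) \<and> continuous_on UNIV q')"

definition SPO_stationary ::
  "(real^'n \<Rightarrow> real) \<Rightarrow> (real^'n \<Rightarrow> real^'m) \<Rightarrow> (real^'m) set \<Rightarrow> ('n \<Rightarrow> real \<Rightarrow> real)
     \<Rightarrow> real^'n \<Rightarrow> real^'n \<Rightarrow> bool" where
  "SPO_stationary f g X p x y \<longleftrightarrow>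
     g x \<in> X \<and> (\<forall>i. x $ i * y $ i = 0) \<and> (\<forall>i. y $ i \<ge> 0) \<and>
     (\<exists>lam gx gy nu. lam \<in> limiting_normal_cone X (g x) \<and>
        (\<forall>i. y $ i = 0 \<longrightarrow> nu i \<ge> 0) \<and>
        0 = grad f x + jacT g x lam + (\<chi> i. if x $ i = 0 then gx i * y $ i else 0) \<and>
        0 = grad_psum p y + (\<chi> i. if y $ i = 0 then gy i * x $ i - nu i else 0))"

definition Pen_stationary ::
  "(real^'n \<Rightarrow> real) \<Rightarrow> (real^'n \<Rightarrow> real^'m) \<Rightarrow> (real^'m) set \<Rightarrow> ('n \<Rightarrow> real \<Rightarrow> real)
     \<Rightarrow> real \<Rightarrow> real^'n \<Rightarrow> real^'n \<Rightarrow> bool" where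
  "Pen_stationary f g X p \<alpha> x y \<longleftrightarrow>
     g x \<in> X \<and> (\<forall>i. y $ i \<ge> 0) \<and>
     (\<exists>lam gam. lam \<in> limiting_normal_cone X (g x) \<and>
        (\<forall>i. y $ i = 0 \<longrightarrow> gam i \<ge> 0) \<and>
        (\<exists>s::real^'n. (\<forall>i. x $ i \<noteq> 0 \<longrightarrow> s $ i = sgn (x $ i)) \<and>
                      (\<forall>i. x $ i = 0 \<longrightarrow> \<bar>s $ i\<bar> \<le> 1) \<and>
           0 = grad f x + \<alpha> *\<^sub>R (\<chi> i. y $ i * s $ i) + jacT g x lam) \<and>
        0 = grad_psum p y + \<alpha> *\<^sub>R (\<chi> i. \<bar>x $ i\<bar>) - (\<chi> i. if y $ i = 0 then gam i else 0))"

(* SP-GMFCQ at x; lambda^a in R^{|I_0(x)|} encoded as a vector supported on I_0(x) *)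
definition SP_GMFCQ ::
  "(real^'n \<Rightarrow> real^'m) \<Rightarrow> (real^'m) set \<Rightarrow> real^'n \<Rightarrow> bool" where
  "SP_GMFCQ g X x \<longleftrightarrow> g x \<in> X \<and>
     (\<forall>la lb. (\<forall>i. x $ i \<noteq> 0 \<longrightarrow> la $ i = 0) \<and> lb \<in> limiting_normal_cone X (g x) \<and>
        la + jacT g x lb = 0 \<longrightarrow> la = 0 \<and> lb = 0)"

end

theory Submission
  imports Defs
begin

(* Under SP-GMFCQ the multipliers of the constraint system are locally bounded: an unbounded
   sequence, normalised and passed to a limit (f' and g' are continuous, the limiting normal cone
   has closed graph), would give a nonzero pair violating SP-GMFCQ.

   Let (x, y) be stationary for Pen(alpha) close to x* and y*, with sign vector s. Where x*_i <> 0,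
   |x_i| stays away from 0, so the equation p_i'(y_i) = - alpha |x_i| < p_i'(0) is impossible for
   y_i > 0 once alpha is large, p_i' being nondecreasing by convexity; hence y_i = 0 there and
   alpha (y o s) is an admissible lambda^a, which is therefore bounded. Where x*_i = 0 we have
   y*_i > 0 because p_i'(0) < 0, so y_i stays away from 0 and the bound on alpha y_i |s_i| forces
   x_i = 0 for large alpha. Thus x o y = 0, and the Pen(alpha) multipliers are multipliers for
   (SPOref). *)

lemma LIMSEQ_inverse_Suc_close:
  fixes w z :: "nat \<Rightarrow> 'a::real_normed_vector"
  assumes "z \<longlonglongrightarrow> z0" "\<And>k. dist (w k) (z k) < inverse (real (Suc k))"
  shows "w \<longlonglongrightarrow> z0"
proof (rule Lim_transform[OF assms(1)])
  show "(\<lambda>k. w k - z k) \<longlonglongrightarrow> 0"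
    using assms(2) by (intro Lim_null_comparison[OF _ LIMSEQ_inverse_real_of_nat])
      (auto simp: dist_norm less_imp_le)
qed

lemma regular_normal_cone_scaleR:
  assumes "v \<in> regular_normal_cone X z" "c \<ge> 0"
  shows "c *\<^sub>R v \<in> regular_normal_cone X z"
  unfolding regular_normal_cone_def
proof (intro CollectI conjI allI impI)
  show "z \<in> X" using assms(1) by (simp add: regular_normal_cone_def)
  fix \<epsilon> :: real assume "\<epsilon> > 0"
  then have "\<epsilon> / (c + 1) > 0" using assms(2) by simp
  then obtain \<delta> where "\<delta> > 0"
    and \<delta>: "\<And>z'. z' \<in> X \<Longrightarrow> norm (z' - z) < \<delta> \<Longrightarrow> inner v (z' - z) \<le> \<epsilon> / (c + 1) * norm (z' - z)"
    using assms(1) unfolding regular_normal_cone_def by blast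
  have "inner (c *\<^sub>R v) (z' - z) \<le> \<epsilon> * norm (z' - z)" if "z' \<in> X" "norm (z' - z) < \<delta>" for z'
  proof -
    have "inner (c *\<^sub>R v) (z' - z) \<le> c * (\<epsilon> / (c + 1) * norm (z' - z))"
      using mult_left_mono[OF \<delta>[OF that] assms(2)] by simp
    also have "\<dots> \<le> \<epsilon> * norm (z' - z)"
      using \<open>\<epsilon> > 0\<close> assms(2) by (simp add: field_simps mult_right_mono)
    finally show ?thesis .
  qed
  then show "\<exists>\<delta>>0. \<forall>z'\<in>X. norm (z' - z) < \<delta> \<longrightarrow> inner (c *\<^sub>R v) (z' - z) \<le> \<epsilon> * norm (z' - z)"
    using \<open>\<delta> > 0\<close> by blast
qed

lemma limiting_normal_cone_scaleR:
  assumes "v \<in> limiting_normal_cone X z" "c \<ge> 0"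
  shows "c *\<^sub>R v \<in> limiting_normal_cone X z"
proof -
  obtain zk vk where "z \<in> X" "\<forall>k. zk k \<in> X \<and> vk k \<in> regular_normal_cone X (zk k)"
    "zk \<longlonglongrightarrow> z" "vk \<longlonglongrightarrow> v"
    using assms(1) unfolding limiting_normal_cone_def by auto
  moreover have "\<forall>k. zk k \<in> X \<and> c *\<^sub>R vk k \<in> regular_normal_cone X (zk k)"
    using calculation(2) regular_normal_cone_scaleR[OF _ assms(2)] by blast
  moreover have "(\<lambda>k. c *\<^sub>R vk k) \<longlonglongrightarrow> c *\<^sub>R v"
    using \<open>vk \<longlonglongrightarrow> v\<close> by (intro tendsto_intros)
  ultimately show ?thesis
    unfolding limiting_normal_cone_def by (intro CollectI conjI exI[of _ zk] exI[of _ "\<lambda>k. c *\<^sub>R vk k"])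
qed

lemma limiting_normal_cone_approx:
  assumes "v \<in> limiting_normal_cone X z" "\<epsilon> > 0"
  shows "\<exists>w u. w \<in> X \<and> u \<in> regular_normal_cone X w \<and> dist w z < \<epsilon> \<and> dist u v < \<epsilon>"
proof -
  obtain zk vk where zv: "\<forall>k. zk k \<in> X \<and> vk k \<in> regular_normal_cone X (zk k)"
    and "zk \<longlonglongrightarrow> z" "vk \<longlonglongrightarrow> v"
    using assms(1) unfolding limiting_normal_cone_def by auto
  then have "\<forall>\<^sub>F k in sequentially. dist (zk k) z < \<epsilon> \<and> dist (vk k) v < \<epsilon>"
    using assms(2) by (intro eventually_conj tendstoD)
  then obtain k where "dist (zk k) z < \<epsilon> \<and> dist (vk k) v < \<epsilon>"
    using eventually_happens' sequentially_bot by blast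
  then show ?thesis using zv by (intro exI[of _ "zk k"] exI[of _ "vk k"]) simp
qed

lemma limiting_normal_cone_closed_graph:
  assumes "\<And>k. v k \<in> limiting_normal_cone X (z k)" "z \<longlonglongrightarrow> z0" "v \<longlonglongrightarrow> v0" "z0 \<in> X"
  shows "v0 \<in> limiting_normal_cone X z0"
proof -
  have "\<exists>w u. w \<in> X \<and> u \<in> regular_normal_cone X w
      \<and> dist w (z k) < inverse (real (Suc k)) \<and> dist u (v k) < inverse (real (Suc k))" for k
    using limiting_normal_cone_approx[OF assms(1)] by simp
  then obtain w u where wu: "\<And>k. w k \<in> X \<and> u k \<in> regular_normal_cone X (w k)
      \<and> dist (w k) (z k) < inverse (real (Suc k)) \<and> dist (u k) (v k) < inverse (real (Suc k))"
    by metis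
  have "w \<longlonglongrightarrow> z0" "u \<longlonglongrightarrow> v0"
    using wu by (auto intro: LIMSEQ_inverse_Suc_close assms(2,3))
  with wu assms(4) show ?thesis
    unfolding limiting_normal_cone_def by (intro CollectI conjI exI[of _ w] exI[of _ u]) auto
qed

lemma convex_on_deriv_tangent:
  fixes q :: "real \<Rightarrow> real"
  assumes "convex_on UNIV q" "q differentiable at c"
  shows "q u - q c \<ge> deriv q c * (u - c)"
  using assms by (intro convex_on_imp_above_tangent) (auto simp: DERIV_deriv_iff_real_differentiable)

lemma convex_on_deriv_mono:
  fixes q :: "real \<Rightarrow> real"
  assumes "convex_on UNIV q" "\<And>t. q differentiable at t" "s \<le> t"
  shows "deriv q s \<le> deriv q t"
proof -
  have "deriv q s * (t - s) \<le> deriv q t * (t - s)"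
    using convex_on_deriv_tangent[OF assms(1,2), of s t] convex_on_deriv_tangent[OF assms(1,2), of t s]
    by (simp add: algebra_simps)
  then show ?thesis
    using assms(3) by (cases "s = t") (auto simp: mult_le_cancel_right)
qed

lemma penalty_cond_differentiable: "penalty_cond \<rho> q \<Longrightarrow> q differentiable at t"
  unfolding penalty_cond_def using real_differentiable_def by blast

lemma penalty_cond_deriv_mono: "penalty_cond \<rho> q \<Longrightarrow> s \<le> t \<Longrightarrow> deriv q s \<le> deriv q t"
  using convex_on_deriv_mono penalty_cond_differentiable unfolding penalty_cond_def by blast

lemma penalty_cond_deriv_0_neg:
  assumes "penalty_cond \<rho> q" "\<rho> > 0"
  shows "deriv q 0 < 0"
proof -
  obtain s where "s > 0" "q 0 - q s = \<rho>" and "convex_on UNIV q"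
    using assms(1) unfolding penalty_cond_def by blast
  moreover have "q s - q 0 \<ge> deriv q 0 * s"
    using convex_on_deriv_tangent[OF \<open>convex_on UNIV q\<close> penalty_cond_differentiable[OF assms(1)], of 0 s]
    by simp
  ultimately show ?thesis
    using assms(2) by (smt (verit) mult_nonneg_nonneg)
qed

lemma C1_map_derivative:
  assumes "C1_map F"
  obtains F' where "\<And>x. (F has_derivative blinfun_apply (F' x)) (at x)"
    "\<And>x. frechet_derivative F (at x) = blinfun_apply (F' x)" "continuous_on UNIV F'"
  using assms unfolding C1_map_def by (metis frechet_derivative_at)

lemma C1_map_isCont: "C1_map F \<Longrightarrow> isCont F x"
  by (metis C1_map_derivative has_derivative_continuous)

lemma C1_map_tendsto_derivative:
  assumes "C1_map F" "(x \<longlongrightarrow> x0) net"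
  obtains F' where "\<And>z. frechet_derivative F (at z) = blinfun_apply (F' z)"
    "((\<lambda>k. F' (x k)) \<longlongrightarrow> F' x0) net"
proof -
  obtain F' where "\<And>x. frechet_derivative F (at x) = blinfun_apply (F' x)" "continuous_on UNIV F'"
    using C1_map_derivative[OF assms(1)] by metis
  moreover have "((\<lambda>k. F' (x k)) \<longlongrightarrow> F' x0) net"
    using calculation(2) assms(2) by (metis continuous_on_eq_continuous_at isCont_tendsto_compose open_UNIV UNIV_I)
  ultimately show ?thesis using that by blast
qed

lemma tendsto_grad:
  assumes "C1_map f" "(x \<longlongrightarrow> x0) net"
  shows "((\<lambda>k. grad f (x k)) \<longlongrightarrow> grad f x0) net"
proof -
  obtain F' where "\<And>z. frechet_derivative f (at z) = blinfun_apply (F' z)" "((\<lambda>k. F' (x k)) \<longlongrightarrow> F' x0) net"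
    using C1_map_tendsto_derivative[OF assms] by blast
  then show ?thesis
    unfolding grad_def by (intro vec_tendstoI) (simp, intro blinfun.tendsto tendsto_const)
qed

lemma tendsto_jacT:
  assumes "C1_map g" "(x \<longlongrightarrow> x0) net" "(v \<longlongrightarrow> v0) net"
  shows "((\<lambda>k. jacT g (x k) (v k)) \<longlongrightarrow> jacT g x0 v0) net"
proof -
  obtain G' where "\<And>z. frechet_derivative g (at z) = blinfun_apply (G' z)" "((\<lambda>k. G' (x k)) \<longlongrightarrow> G' x0) net"
    using C1_map_tendsto_derivative[OF assms(1,2)] by blast
  then show ?thesis
    unfolding jacT_def by (intro vec_tendstoI) (simp, intro tendsto_inner assms(3) blinfun.tendsto tendsto_const)
qed

lemma jacT_scaleR: "jacT g x (c *\<^sub>R l) = c *\<^sub>R jacT g x l"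
  unfolding jacT_def by (simp add: vec_eq_iff)

lemma eventually_nhds_vec_components:
  fixes z :: "real^'n"
  assumes "\<And>i. e i > 0"
  shows "\<forall>\<^sub>F w in nhds z. \<forall>i. \<bar>w $ i - z $ i\<bar> < e i"
proof (rule eventually_all_finite)
  fix i
  have "((\<lambda>w. \<bar>w $ i - z $ i\<bar>) \<longlongrightarrow> 0) (nhds z)"
    using tendsto_rabs_zero[OF LIM_zero[OF tendsto_vec_nth[OF filterlim_ident]]] .
  then show "\<forall>\<^sub>F w in nhds z. \<bar>w $ i - z $ i\<bar> < e i"
    using order_tendstoD(2) assms by blast
qed

lemma eventually_at_top_less_mult:
  fixes c :: real
  assumes "c > 0"
  shows "\<forall>\<^sub>F \<alpha> in at_top. K < \<alpha> * c"
  using eventually_gt_at_top[of "K / c"] by (rule eventually_mono) (use assms in \<open>simp add: field_simps\<close>)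

lemma normalized_pair_convergent_subseq:
  fixes u :: "nat \<Rightarrow> 'a::euclidean_space" and v :: "nat \<Rightarrow> 'b::euclidean_space"
  defines "t \<equiv> \<lambda>k. norm (u k) + norm (v k)"
  assumes "filterlim t at_top sequentially"
  obtains r a b where "strict_mono r" "norm a + norm b = 1"
    "(\<lambda>k. inverse (t (r k)) *\<^sub>R u (r k)) \<longlonglongrightarrow> a" "(\<lambda>k. inverse (t (r k)) *\<^sub>R v (r k)) \<longlonglongrightarrow> b"
proof -
  define w where "w k = (inverse (t k) *\<^sub>R u k, inverse (t k) *\<^sub>R v k)" for k
  have norm_w: "norm (fst (w k)) + norm (snd (w k)) = inverse (t k) * t k" for k
    unfolding w_def t_def by (simp add: algebra_simps)
  have "w k \<in> cball 0 1" for k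
  proof -
    have "norm (w k) \<le> inverse (t k) * t k"
      using norm_Pair_le[of "fst (w k)" "snd (w k)"] norm_w[of k] by simp
    also have "\<dots> \<le> 1"
      by (cases "t k = 0") auto
    finally show ?thesis by simp
  qed
  then obtain r l where r: "strict_mono r" and l: "(w \<circ> r) \<longlonglongrightarrow> l"
    using seq_compactE[OF compact_imp_seq_compact[OF compact_cball]] by metis
  obtain a b where "l = (a, b)" by (cases l)
  then have a: "(\<lambda>k. fst (w (r k))) \<longlonglongrightarrow> a" and b: "(\<lambda>k. snd (w (r k))) \<longlonglongrightarrow> b"
    using tendsto_fst[OF l] tendsto_snd[OF l] by (simp_all add: o_def)
  have lim: "(\<lambda>k. norm (fst (w (r k))) + norm (snd (w (r k)))) \<longlonglongrightarrow> norm a + norm b"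
    using a b by (intro tendsto_intros)
  have "\<forall>\<^sub>F k in sequentially. t k > 0"
    using filterlim_at_top_dense[THEN iffD1, OF assms(2)] by blast
  then have "\<forall>\<^sub>F k in sequentially. norm (fst (w (r k))) + norm (snd (w (r k))) = 1"
    by (rule eventually_mono[OF eventually_subseq[OF r]]) (simp add: norm_w)
  then have "norm a + norm b = 1"
    using LIMSEQ_unique[OF lim tendsto_eventually] by blast
  with r a b show ?thesis
    using that unfolding w_def by simp
qed

lemma scaled_stationarity_limit:
  assumes f: "C1_map f" and g: "C1_map g" and x: "x \<longlonglongrightarrow> x0" and "s \<longlonglongrightarrow> 0"
    and a: "(\<lambda>k. s k *\<^sub>R la k) \<longlonglongrightarrow> a" and b: "(\<lambda>k. s k *\<^sub>R lam k) \<longlonglongrightarrow> b"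
    and eq: "\<And>k. la k + jacT g (x k) (lam k) + grad f (x k) = 0"
  shows "a + jacT g x0 b = 0"
proof -
  have "s k *\<^sub>R la k + jacT g (x k) (s k *\<^sub>R lam k) + s k *\<^sub>R grad f (x k) = 0" for k
  proof -
    have "s k *\<^sub>R (la k + jacT g (x k) (lam k) + grad f (x k)) = 0"
      using eq by simp
    then show ?thesis
      by (simp add: jacT_scaleR scaleR_add_right)
  qed
  moreover have "(\<lambda>k. s k *\<^sub>R la k + jacT g (x k) (s k *\<^sub>R lam k) + s k *\<^sub>R grad f (x k))
      \<longlonglongrightarrow> a + jacT g x0 b + 0 *\<^sub>R grad f x0"
    by (intro tendsto_intros a tendsto_jacT[OF g x b] tendsto_grad[OF f x] \<open>s \<longlonglongrightarrow> 0\<close>)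
  ultimately show ?thesis
    by (simp add: LIMSEQ_const_iff)
qed

lemma SP_GMFCQ_multipliers_not_unbounded:
  assumes f: "C1_map f" and g: "C1_map g" and gmfcq: "SP_GMFCQ g X xs"
    and x: "x \<longlonglongrightarrow> xs"
    and lam: "\<And>k. lam k \<in> limiting_normal_cone X (g (x k))"
    and la_supp: "\<And>k i. xs $ i \<noteq> 0 \<Longrightarrow> la k $ i = 0"
    and eq: "\<And>k. la k + jacT g (x k) (lam k) + grad f (x k) = 0"
  shows "\<not> filterlim (\<lambda>k. norm (la k) + norm (lam k)) at_top sequentially"
proof
  define t where "t k = norm (la k) + norm (lam k)" for k
  assume "filterlim (\<lambda>k. norm (la k) + norm (lam k)) at_top sequentially"
  then have t_inf: "filterlim t at_top sequentially"
    unfolding t_def .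
  obtain r a b where r: "strict_mono r" and ab: "norm a + norm b = 1"
    and a: "(\<lambda>k. inverse (t (r k)) *\<^sub>R la (r k)) \<longlonglongrightarrow> a"
    and b: "(\<lambda>k. inverse (t (r k)) *\<^sub>R lam (r k)) \<longlonglongrightarrow> b"
    using normalized_pair_convergent_subseq[of la lam] t_inf unfolding t_def by blast
  have t: "filterlim (\<lambda>k. t (r k)) at_top sequentially"
    using filterlim_compose[OF t_inf filterlim_subseq[OF r]] .
  have xr: "(\<lambda>k. x (r k)) \<longlonglongrightarrow> xs"
    using LIMSEQ_subseq_LIMSEQ[OF x r] by (simp add: o_def)
  have "\<forall>i. xs $ i \<noteq> 0 \<longrightarrow> a $ i = 0"
  proof (intro allI impI)
    fix i assume "xs $ i \<noteq> 0"
    then have "(\<lambda>k. (inverse (t (r k)) *\<^sub>R la (r k)) $ i) = (\<lambda>k. 0)"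
      by (simp add: la_supp)
    with tendsto_vec_nth[OF a, of i] show "a $ i = 0"
      by (simp add: LIMSEQ_const_iff)
  qed
  moreover have "b \<in> limiting_normal_cone X (g xs)"
  proof (rule limiting_normal_cone_closed_graph[OF _ _ b])
    show "(\<lambda>k. g (x (r k))) \<longlonglongrightarrow> g xs"
      using isCont_tendsto_compose[OF C1_map_isCont[OF g] xr] .
    show "g xs \<in> X"
      using gmfcq unfolding SP_GMFCQ_def by blast
  next
    show "inverse (t (r k)) *\<^sub>R lam (r k) \<in> limiting_normal_cone X (g (x (r k)))" for k
      by (rule limiting_normal_cone_scaleR[OF lam]) (simp add: t_def)
  qed
  moreover have "a + jacT g xs b = 0"
    using tendsto_inverse_0_at_top[OF t] by (rule scaled_stationarity_limit[OF f g xr _ a b eq])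
  ultimately have "a = 0 \<and> b = 0"
    using gmfcq unfolding SP_GMFCQ_def by blast
  with ab show False by simp
qed

lemma SP_GMFCQ_multiplier_bound:
  assumes f: "C1_map f" and g: "C1_map g" and gmfcq: "SP_GMFCQ g X xs"
  shows "\<exists>\<delta>>0. \<exists>M. \<forall>x lam la. norm (x - xs) < \<delta> \<longrightarrow> lam \<in> limiting_normal_cone X (g x) \<longrightarrow>
           (\<forall>i. xs $ i \<noteq> 0 \<longrightarrow> la $ i = 0) \<longrightarrow> la + jacT g x lam + grad f x = 0 \<longrightarrow> norm la \<le> M"
proof (rule ccontr)
  assume "\<not> ?thesis"
  then have "\<exists>x lam la. norm (x - xs) < inverse (real (Suc k)) \<and> lam \<in> limiting_normal_cone X (g x) \<and>
      (\<forall>i. xs $ i \<noteq> 0 \<longrightarrow> la $ i = 0) \<and> la + jacT g x lam + grad f x = 0 \<and> real k < norm la" for k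
    by (meson not_le inverse_Suc)
  then obtain x lam la where H: "\<And>k. norm (x k - xs) < inverse (real (Suc k)) \<and>
      lam k \<in> limiting_normal_cone X (g (x k)) \<and> (\<forall>i. xs $ i \<noteq> 0 \<longrightarrow> la k $ i = 0) \<and>
      la k + jacT g (x k) (lam k) + grad f (x k) = 0 \<and> real k < norm (la k)"
    by metis
  have "x \<longlonglongrightarrow> xs"
    using H by (intro LIMSEQ_inverse_Suc_close[OF tendsto_const]) (simp add: dist_norm)
  moreover have "filterlim (\<lambda>k. norm (la k) + norm (lam k)) at_top sequentially"
  proof (rule filterlim_at_top_mono[OF filterlim_real_sequentially always_eventually], rule allI)
    show "real k \<le> norm (la k) + norm (lam k)" for k
      using H[of k] norm_ge_zero[of "lam k"] by linarith
  qed
  ultimately show False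
    using SP_GMFCQ_multipliers_not_unbounded[OF f g gmfcq] H by blast
qed

lemma SPO_stationary_y_pos:
  assumes "SPO_stationary f g X p xs ys" "penalty_cond \<rho> (p i)" "\<rho> > 0" "xs $ i = 0"
  shows "ys $ i > 0"
proof (rule ccontr)
  obtain gy nu where ys: "ys $ i \<ge> 0" "ys $ i = 0 \<Longrightarrow> nu i \<ge> 0"
    and E: "0 = grad_psum p ys + (\<chi> i. if ys $ i = 0 then gy i * xs $ i - nu i else 0)"
    using assms(1) unfolding SPO_stationary_def by blast
  assume "\<not> ys $ i > 0"
  with ys have "deriv (p i) 0 \<ge> 0"
    using E[unfolded vec_eq_iff, rule_format, of i] assms(4) by (simp add: grad_psum_def)
  with penalty_cond_deriv_0_neg[OF assms(2,3)] show False by simp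
qed

lemma Pen_stationary_y_eq_0:
  assumes "Pen_stationary f g X p \<alpha> x y" "penalty_cond \<rho> (p i)" "- deriv (p i) 0 < \<alpha> * \<bar>x $ i\<bar>"
  shows "y $ i = 0"
proof (rule ccontr)
  obtain gam where y: "y $ i \<ge> 0"
    and E: "0 = grad_psum p y + \<alpha> *\<^sub>R (\<chi> i. \<bar>x $ i\<bar>) - (\<chi> i. if y $ i = 0 then gam i else 0)"
    using assms(1) unfolding Pen_stationary_def by blast
  assume "y $ i \<noteq> 0"
  with y have "deriv (p i) (y $ i) = - \<alpha> * \<bar>x $ i\<bar>" "y $ i \<ge> 0"
    using E[unfolded vec_eq_iff, rule_format, of i] by (auto simp: grad_psum_def)
  with penalty_cond_deriv_mono[OF assms(2), of 0 "y $ i"] assms(3) show False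
    by simp
qed

lemma Pen_stationary_complementary_imp_SPO_stationary:
  assumes "Pen_stationary f g X p \<alpha> x y" and compl: "\<forall>i. x $ i * y $ i = 0"
  shows "SPO_stationary f g X p x y"
proof -
  obtain lam gam s where basic: "g x \<in> X" "\<forall>i. y $ i \<ge> 0" "lam \<in> limiting_normal_cone X (g x)"
    "\<forall>i. y $ i = 0 \<longrightarrow> gam i \<ge> 0"
    and E1: "0 = grad f x + \<alpha> *\<^sub>R (\<chi> i. y $ i * s $ i) + jacT g x lam"
    and E2: "0 = grad_psum p y + \<alpha> *\<^sub>R (\<chi> i. \<bar>x $ i\<bar>) - (\<chi> i. if y $ i = 0 then gam i else 0)"
    using assms(1) unfolding Pen_stationary_def by blast
  have E1': "0 = grad f x + jacT g x lam + (\<chi> i. if x $ i = 0 then \<alpha> * s $ i * y $ i else 0)"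
  proof (subst vec_eq_iff, intro allI)
    fix i
    show "0 $ i = (grad f x + jacT g x lam + (\<chi> i. if x $ i = 0 then \<alpha> * s $ i * y $ i else 0)) $ i"
      using E1[unfolded vec_eq_iff, rule_format, of i] compl[rule_format, of i] by (auto simp: algebra_simps)
  qed
  have E2': "0 = grad_psum p y + (\<chi> i. if y $ i = 0 then \<alpha> * sgn (x $ i) * x $ i - gam i else 0)"
  proof (subst vec_eq_iff, intro allI)
    fix i
    have "sgn (x $ i) * x $ i = \<bar>x $ i\<bar>"
      by (simp add: abs_sgn mult.commute)
    then show "0 $ i = (grad_psum p y + (\<chi> i. if y $ i = 0 then \<alpha> * sgn (x $ i) * x $ i - gam i else 0)) $ i"
      using E2[unfolded vec_eq_iff, rule_format, of i] compl[rule_format, of i]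
      by (cases "y $ i = 0") (simp_all add: mult.assoc)
  qed
  show ?thesis
    unfolding SPO_stationary_def
    by (intro conjI basic compl exI[of _ lam] exI[of _ "\<lambda>i. \<alpha> * s $ i"]
        exI[of _ "\<lambda>i. \<alpha> * sgn (x $ i)"] exI[of _ gam] E1' E2')
qed

lemma SP_GMFCQ_Pen_stationary_bound:
  assumes "C1_map f" "C1_map g" "SP_GMFCQ g X xs"
  obtains \<delta> M where "\<delta> > 0"
    "\<And>\<alpha> x y i. \<alpha> \<ge> 0 \<Longrightarrow> norm (x - xs) < \<delta> \<Longrightarrow> Pen_stationary f g X p \<alpha> x y \<Longrightarrow>
       (\<forall>j. xs $ j \<noteq> 0 \<longrightarrow> y $ j = 0) \<Longrightarrow> x $ i \<noteq> 0 \<Longrightarrow> \<alpha> * y $ i \<le> M"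
proof -
  obtain \<delta> M where "\<delta> > 0" and bound: "\<forall>x lam la. norm (x - xs) < \<delta> \<longrightarrow> lam \<in> limiting_normal_cone X (g x) \<longrightarrow>
      (\<forall>i. xs $ i \<noteq> 0 \<longrightarrow> la $ i = 0) \<longrightarrow> la + jacT g x lam + grad f x = 0 \<longrightarrow> norm la \<le> M"
    using SP_GMFCQ_multiplier_bound[OF assms] by (elim exE conjE)
  have "\<alpha> * y $ i \<le> M"
    if "\<alpha> \<ge> 0" "norm (x - xs) < \<delta>" "Pen_stationary f g X p \<alpha> x y"
      and y_supp: "\<forall>j. xs $ j \<noteq> 0 \<longrightarrow> y $ j = 0" and "x $ i \<noteq> 0" for \<alpha> x y i
  proof -
    obtain lam s where "\<forall>j. y $ j \<ge> 0" "lam \<in> limiting_normal_cone X (g x)"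
      "\<forall>j. x $ j \<noteq> 0 \<longrightarrow> s $ j = sgn (x $ j)"
      and E1: "0 = grad f x + \<alpha> *\<^sub>R (\<chi> j. y $ j * s $ j) + jacT g x lam"
      using \<open>Pen_stationary f g X p \<alpha> x y\<close> unfolding Pen_stationary_def by blast
    define la where "la = \<alpha> *\<^sub>R (\<chi> j. y $ j * s $ j)"
    have "la + jacT g x lam + grad f x = 0"
      using E1 unfolding la_def by (simp add: algebra_simps)
    moreover have "\<forall>j. xs $ j \<noteq> 0 \<longrightarrow> la $ j = 0"
      using y_supp unfolding la_def by simp
    ultimately have "norm la \<le> M"
      using bound \<open>norm (x - xs) < \<delta>\<close> \<open>lam \<in> limiting_normal_cone X (g x)\<close> by blast
    moreover have "\<bar>la $ i\<bar> = \<alpha> * y $ i"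
      using \<open>\<alpha> \<ge> 0\<close> \<open>x $ i \<noteq> 0\<close> \<open>\<forall>j. y $ j \<ge> 0\<close> \<open>\<forall>j. x $ j \<noteq> 0 \<longrightarrow> s $ j = sgn (x $ j)\<close>
      unfolding la_def by (simp add: abs_mult)
    ultimately show ?thesis
      using component_le_norm_cart[of la i] by linarith
  qed
  with \<open>\<delta> > 0\<close> show ?thesis using that by blast
qed

lemma Pen_stationary_complementary:
  assumes stat: "Pen_stationary f g X p \<alpha> x y" and pen: "\<And>i. penalty_cond \<rho> (p i)" and "\<alpha> > 0"
    and bound: "\<And>i. \<forall>j. xs $ j \<noteq> 0 \<longrightarrow> y $ j = 0 \<Longrightarrow> x $ i \<noteq> 0 \<Longrightarrow> \<alpha> * y $ i \<le> M"
    and large: "\<And>i. - deriv (p i) 0 < \<alpha> * c i \<and> M < \<alpha> * c i"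
    and near_x: "\<And>i. xs $ i \<noteq> 0 \<Longrightarrow> c i \<le> \<bar>x $ i\<bar>"
    and near_y: "\<And>i. xs $ i = 0 \<Longrightarrow> c i \<le> y $ i"
  shows "x $ i * y $ i = 0"
proof -
  have "- deriv (p j) 0 < \<alpha> * \<bar>x $ j\<bar>" if "xs $ j \<noteq> 0" for j
    using large[of j] mult_left_mono[OF near_x[OF that], of \<alpha>] \<open>\<alpha> > 0\<close> by linarith
  then have y_supp: "\<forall>j. xs $ j \<noteq> 0 \<longrightarrow> y $ j = 0"
    using Pen_stationary_y_eq_0[OF stat pen] by blast
  have "x $ i = 0" if "xs $ i = 0"
    using bound[OF y_supp, of i] large[of i] mult_left_mono[OF near_y[OF that], of \<alpha>] \<open>\<alpha> > 0\<close>
    by fastforce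
  with y_supp show ?thesis by auto
qed

lemma eventually_Pen_stationary_complementary:
  fixes p :: "'n::finite \<Rightarrow> real \<Rightarrow> real" and xs ys :: "real^'n"
  assumes "C1_map f" "C1_map g" "SP_GMFCQ g X xs" "SPO_stationary f g X p xs ys"
    and pen: "\<And>i. penalty_cond \<rho> (p i)" and "\<rho> > 0"
  shows "\<forall>\<^sub>F (\<alpha>, x, y) in at_top \<times>\<^sub>F nhds (xs, ys).
           Pen_stationary f g X p \<alpha> x y \<longrightarrow> (\<forall>i. x $ i * y $ i = 0)"
proof -
  obtain \<delta> M where "\<delta> > 0" and bound: "\<And>\<alpha> x y i. \<alpha> \<ge> 0 \<Longrightarrow> norm (x - xs) < \<delta> \<Longrightarrow>
      Pen_stationary f g X p \<alpha> x y \<Longrightarrow> \<forall>j. xs $ j \<noteq> 0 \<longrightarrow> y $ j = 0 \<Longrightarrow> x $ i \<noteq> 0 \<Longrightarrow> \<alpha> * y $ i \<le> M"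
    using SP_GMFCQ_Pen_stationary_bound[OF assms(1-3)] by blast
  define c where "c i = (if xs $ i \<noteq> 0 then \<bar>xs $ i\<bar> else ys $ i) / 2" for i
  have c_pos: "c i > 0" for i
    using SPO_stationary_y_pos[OF assms(4) pen assms(6)] unfolding c_def by fastforce
  have large: "\<forall>\<^sub>F \<alpha> in at_top. \<alpha> > 0 \<and> (\<forall>i. - deriv (p i) 0 < \<alpha> * c i \<and> M < \<alpha> * c i)"
    by (intro eventually_conj eventually_gt_at_top eventually_all_finite eventually_at_top_less_mult c_pos)
  have "\<forall>\<^sub>F x in nhds xs. norm (x - xs) < \<delta>"
    using order_tendstoD(2)[OF tendsto_norm_zero[OF LIM_zero[OF filterlim_ident]] \<open>\<delta> > 0\<close>] .
  then have near: "\<forall>\<^sub>F (x, y) in nhds (xs, ys). norm (x - xs) < \<delta> \<and>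
      (\<forall>i. \<bar>x $ i - xs $ i\<bar> < c i) \<and> (\<forall>i. \<bar>y $ i - ys $ i\<bar> < c i)"
    unfolding nhds_prod case_prod_beta
    using eventually_prodI[OF eventually_conj[OF _ eventually_nhds_vec_components[OF c_pos]]
        eventually_nhds_vec_components[OF c_pos]] by simp
  have compl: "x $ i * y $ i = 0"
    if "\<alpha> > 0 \<and> (\<forall>i. - deriv (p i) 0 < \<alpha> * c i \<and> M < \<alpha> * c i)"
      and near: "norm (x - xs) < \<delta> \<and> (\<forall>i. \<bar>x $ i - xs $ i\<bar> < c i) \<and> (\<forall>i. \<bar>y $ i - ys $ i\<bar> < c i)"
      and stat: "Pen_stationary f g X p \<alpha> x y" for \<alpha> x y i
  proof (rule Pen_stationary_complementary[OF stat pen])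
    show "c j \<le> \<bar>x $ j\<bar>" if "xs $ j \<noteq> 0" for j
      using near that unfolding c_def by (smt (verit) field_sum_of_halves)
    show "c j \<le> y $ j" if "xs $ j = 0" for j
      using near that unfolding c_def by (smt (verit) field_sum_of_halves)
  qed (use that bound[OF _ _ stat] in auto)
  show ?thesis
    using eventually_prodI[OF large near] by (rule eventually_mono) (use compl in \<open>fastforce simp: case_prod_beta\<close>)
qed

theorem mainTheorem4:
  fixes f :: "real^'n \<Rightarrow> real" and g :: "real^'n \<Rightarrow> real^'m"
    and X :: "(real^'m) set" and \<rho> :: real and p :: "'n \<Rightarrow> real \<Rightarrow> real"
    and xs ys :: "real^'n"
  assumes "C1_map f" and "C1_map g"
    and "X \<noteq> {}" and "closed X"
    and "\<rho> > 0"
    and "\<forall>i. penalty_cond \<rho> (p i)"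
    and "SPO_stationary f g X p xs ys"
    and "SP_GMFCQ g X xs"
  shows "\<exists>\<alpha>s>0. \<exists>U. open U \<and> (xs, ys) \<in> U \<and>
           (\<forall>\<alpha>\<ge>\<alpha>s. \<forall>x y. (x, y) \<in> U \<and> Pen_stationary f g X p \<alpha> x y \<longrightarrow> SPO_stationary f g X p x y)"
proof -
  have "\<forall>\<^sub>F (\<alpha>, x, y) in at_top \<times>\<^sub>F nhds (xs, ys).
          Pen_stationary f g X p \<alpha> x y \<longrightarrow> SPO_stationary f g X p x y"
    using eventually_Pen_stationary_complementary[OF assms(1,2,8,7) assms(6)[rule_format] assms(5)]
    by (rule eventually_mono) (auto intro: Pen_stationary_complementary_imp_SPO_stationary)
  then obtain P Q where "eventually P at_top" "eventually Q (nhds (xs, ys))"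
    and PQ: "\<And>\<alpha> x y. P \<alpha> \<Longrightarrow> Q (x, y) \<Longrightarrow> Pen_stationary f g X p \<alpha> x y \<Longrightarrow> SPO_stationary f g X p x y"
    unfolding eventually_prod_filter by fastforce
  then obtain N U where "\<And>\<alpha>. \<alpha> \<ge> N \<Longrightarrow> P \<alpha>" "open U" "(xs, ys) \<in> U" "\<And>z. z \<in> U \<Longrightarrow> Q z"
    unfolding eventually_at_top_linorder eventually_nhds by metis
  then show ?thesis
    by (intro exI[of _ "max N 1"] conjI exI[of _ U]) (auto intro: PQ)
qed

end
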